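(* Let $c_v>\frac12$ and let $\varrho_\pm,p_\pm>0$, $v_\pm\in\mathbb{R}$ be Riemann data for the one-dimensional full Euler system whose 1D Riemann solution consists of a 1-shock, possibly a 2-contact discontinuity, and a 3-shock, with intermediate states $(\varrho_{M-},v_M,p_M)$, $(\varrho_{M+},v_M,p_M)$, and assume $v_M=0$. Let $\varepsilon_{\max}>0$ and functions $\mu_0,\mu_1,\mu_2:(0,\varepsilon_{\max}]\to\mathbb{R}$ be as described in the context (so that $\mu_0(\varepsilon)<\mu_1(\varepsilon)<\mu_2(\varepsilon)$). For $(\varepsilon,\delta)\in(0,\varepsilon_{\max}]\times(0,p_M)$ define $C_1(\varepsilon,\delta)=\frac{2}{(\varrho_{M-}+\varepsilon)(\mu_0-\mu_1)}\Big[-\mu_0\big(c_v(p_M-\delta-p_-)-\tfrac12\varrho_-v_-^2\big)+\mu_1(c_v+1)(p_M-\delta)-\big(\tfrac12\varrho_-v_-^2+(c_v+1)p_-\big)v_-\Big]$, $C_2(\varepsilon,\delta)=\frac{2}{(\varrho_{M+}-\varepsilon)(\mu_2-\mu_1)}\Big[-\mu_2\big(c_v(p_M-\delta-p_+)-\tfrac12\varrho_+v_+^2\big)+\mu_1(c_v+1)(p_M-\delta)-\big(\tfrac12\varrho_+v_+^2+(c_v+1)p_+\big)v_+\Big]$, $\gamma_1(\varepsilon,\delta)=\frac{1}{\varrho_{M-}+\varepsilon}\Big[(\varrho_{M-}+\varepsilon)\frac{C_1}{2}-\varrho_-v_-^2+p_M-\delta-p_--\mu_0\big((\varrho_{M-}+\varepsilon)\mu_1-\varrho_-v_-\big)\Big]$,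 $\gamma_2(\varepsilon,\delta)=\frac{1}{\varrho_{M+}-\varepsilon}\Big[(\varrho_{M+}-\varepsilon)\frac{C_2}{2}-\varrho_+v_+^2+p_M-\delta-p_+-\mu_2\big((\varrho_{M+}-\varepsilon)\mu_1-\varrho_+v_+\big)\Big]$, where $\mu_i=\mu_i(\varepsilon)$ and $C_i=C_i(\varepsilon,\delta)$. Then $\lim_{(\varepsilon,\delta)\to0}C_1(\varepsilon,\delta)=\lim_{(\varepsilon,\delta)\to0}C_2(\varepsilon,\delta)=v_M^2$ and $\lim_{(\varepsilon,\delta)\to0}\gamma_1(\varepsilon,\delta)=\lim_{(\varepsilon,\delta)\to0}\gamma_2(\varepsilon,\delta)=-\frac{v_M^2}{2}$.
   Context: The one-dimensional full Euler system for an ideal gas is $\partial_t\varrho+\partial_2(\varrho v)=0$, $\partial_t(\varrho v)+\partial_2(\varrho v^2+p)=0$, $\partial_t(\frac12\varrho v^2+c_vp)+\partial_2[(\frac12\varrho v^2+(c_v+1)p)v]=0$; its 1D Riemann solution is the unique self-similar BV solution with the given data, consisting of a 1-wave, a possibly absent contact discontinuity and a 3-wave separated by constant states; here both outer waves are admissible shocks with speeds $\sigma_\pm$, and $\varrho_{M\pm}>\varrho_\pm$, $p_M>\max\{p_-,p_+\}$. Define $A(\varepsilon)=\varrho_-(\varrho_{M-}+\varepsilon)(\varrho_{M+}-\varepsilon-\varrho_+)-\varrho_+(\varrho_{M+}-\varepsilon)(\varrho_{M-}+\varepsilon-\varrho_-)$, $B(\varepsilon)=\varrho_-\varrho_+(\varrho_{M-}+\varepsilon)(\varrho_{M+}-\varepsilon)(v_--v_+)^2-(p_--p_+)A(\varepsilon)$,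 $D(\varepsilon)=v_-\varrho_-(\varrho_{M-}+\varepsilon)(\varrho_{M+}-\varepsilon-\varrho_+)-v_+\varrho_+(\varrho_{M+}-\varepsilon)(\varrho_{M-}+\varepsilon-\varrho_-)$. $\varepsilon_{\max}>0$ is such that on $(0,\varepsilon_{\max}]$: $A\neq0$, $B>0$, $\varrho_{M+}-\varepsilon-\varrho_+>0$, $\varrho_{M-}+\varepsilon-\varrho_->0$ and $\mu_0<\mu_1<\mu_2$, where $\mu_0=\frac1A\big[D+\varrho_-\varrho_+(\varrho_{M+}-\varepsilon)(v_--v_+)-\sqrt{(\varrho_{M-}+\varepsilon)^2\frac{\varrho_{M+}-\varepsilon-\varrho_+}{\varrho_{M-}+\varepsilon-\varrho_-}B}\big]$, $\mu_1=\frac1A\big[D-\sqrt{(\varrho_{M-}+\varepsilon-\varrho_-)(\varrho_{M+}-\varepsilon-\varrho_+)B}\big]$, $\mu_2=\frac1A\big[D+\varrho_-\varrho_+(\varrho_{M-}+\varepsilon)(v_--v_+)-\sqrt{(\varrho_{M+}-\varepsilon)^2\frac{\varrho_{M-}+\varepsilon-\varrho_-}{\varrho_{M+}-\varepsilon-\varrho_+}B}\big]$ (all evaluated at $\varepsilon$). The paper shows such $\varepsilon_{\max}$ exists. *)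

theory Defs
  imports "HOL-Analysis.Analysis"
begin

text \<open>Notation: left state (rL,vL,pL) = (rho_-, v_-, p_-), right state (rR,vR,pR) = (rho_+, v_+, p_+),
 intermediate states (rML, vM, pM) and (rMR, vM, pM); cv = c_v.\<close>

definition energy :: "real \<Rightarrow> real \<Rightarrow> real \<Rightarrow> real \<Rightarrow> real" where
  "energy cv r v p = r * v^2 / 2 + cv * p"

definition RH :: "real \<Rightarrow> real \<Rightarrow> real \<Rightarrow> real \<Rightarrow> real \<Rightarrow> real \<Rightarrow> real \<Rightarrow> real \<Rightarrow> bool" where
  "RH cv s r1 v1 p1 r2 v2 p2 \<longleftrightarrow>
     s * (r2 - r1) = r2 * v2 - r1 * v1 \<and>
     s * (r2 * v2 - r1 * v1) = (r2 * v2^2 + p2) - (r1 * v1^2 + p1) \<and>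
     s * (energy cv r2 v2 p2 - energy cv r1 v1 p1)
       = (energy cv r2 v2 p2 + p2) * v2 - (energy cv r1 v1 p1 + p1) * v1"

definition sound_speed :: "real \<Rightarrow> real \<Rightarrow> real \<Rightarrow> real" where
  "sound_speed cv r p = sqrt (((cv + 1) / cv) * p / r)"

definition Afun :: "real \<Rightarrow> real \<Rightarrow> real \<Rightarrow> real \<Rightarrow> real \<Rightarrow> real" where
  "Afun rL rR rML rMR e =
     rL * (rML + e) * (rMR - e - rR) - rR * (rMR - e) * (rML + e - rL)"

definition Bfun :: "real \<Rightarrow> real \<Rightarrow> real \<Rightarrow> real \<Rightarrow> real \<Rightarrow> real \<Rightarrow> real \<Rightarrow> real \<Rightarrow> real \<Rightarrow> real" where
  "Bfun rL vL pL rR vR pR rML rMR e =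
     rL * rR * (rML + e) * (rMR - e) * (vL - vR)^2 - (pL - pR) * Afun rL rR rML rMR e"

definition Dfun :: "real \<Rightarrow> real \<Rightarrow> real \<Rightarrow> real \<Rightarrow> real \<Rightarrow> real \<Rightarrow> real \<Rightarrow> real" where
  "Dfun rL vL rR vR rML rMR e =
     vL * rL * (rML + e) * (rMR - e - rR) - vR * rR * (rMR - e) * (rML + e - rL)"

definition mu0 :: "real \<Rightarrow> real \<Rightarrow> real \<Rightarrow> real \<Rightarrow> real \<Rightarrow> real \<Rightarrow> real \<Rightarrow> real \<Rightarrow> real \<Rightarrow> real" where
  "mu0 rL vL pL rR vR pR rML rMR e =
     (Dfun rL vL rR vR rML rMR e + rL * rR * (rMR - e) * (vL - vR)
      - sqrt ((rML + e)^2 * ((rMR - e - rR) / (rML + e - rL)) * Bfun rL vL pL rR vR pR rML rMR e))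
     / Afun rL rR rML rMR e"

definition mu1 :: "real \<Rightarrow> real \<Rightarrow> real \<Rightarrow> real \<Rightarrow> real \<Rightarrow> real \<Rightarrow> real \<Rightarrow> real \<Rightarrow> real \<Rightarrow> real" where
  "mu1 rL vL pL rR vR pR rML rMR e =
     (Dfun rL vL rR vR rML rMR e
      - sqrt ((rML + e - rL) * (rMR - e - rR) * Bfun rL vL pL rR vR pR rML rMR e))
     / Afun rL rR rML rMR e"

definition mu2 :: "real \<Rightarrow> real \<Rightarrow> real \<Rightarrow> real \<Rightarrow> real \<Rightarrow> real \<Rightarrow> real \<Rightarrow> real \<Rightarrow> real \<Rightarrow> real" where
  "mu2 rL vL pL rR vR pR rML rMR e =
     (Dfun rL vL rR vR rML rMR e + rL * rR * (rML + e) * (vL - vR)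
      - sqrt ((rMR - e)^2 * ((rML + e - rL) / (rMR - e - rR)) * Bfun rL vL pL rR vR pR rML rMR e))
     / Afun rL rR rML rMR e"

definition C1 :: "real \<Rightarrow> real \<Rightarrow> real \<Rightarrow> real \<Rightarrow> real \<Rightarrow> real \<Rightarrow> real \<Rightarrow> real \<Rightarrow> real \<Rightarrow> real \<Rightarrow> real \<Rightarrow> real \<Rightarrow> real" where
  "C1 cv rL vL pL rR vR pR rML rMR pM e d =
     (let m0 = mu0 rL vL pL rR vR pR rML rMR e; m1 = mu1 rL vL pL rR vR pR rML rMR e in
      2 / ((rML + e) * (m0 - m1)) *
       (- m0 * (cv * (pM - d - pL) - rL * vL^2 / 2) + m1 * (cv + 1) * (pM - d)
        - (rL * vL^2 / 2 + (cv + 1) * pL) * vL))"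

definition C2 :: "real \<Rightarrow> real \<Rightarrow> real \<Rightarrow> real \<Rightarrow> real \<Rightarrow> real \<Rightarrow> real \<Rightarrow> real \<Rightarrow> real \<Rightarrow> real \<Rightarrow> real \<Rightarrow> real \<Rightarrow> real" where
  "C2 cv rL vL pL rR vR pR rML rMR pM e d =
     (let m2 = mu2 rL vL pL rR vR pR rML rMR e; m1 = mu1 rL vL pL rR vR pR rML rMR e in
      2 / ((rMR - e) * (m2 - m1)) *
       (- m2 * (cv * (pM - d - pR) - rR * vR^2 / 2) + m1 * (cv + 1) * (pM - d)
        - (rR * vR^2 / 2 + (cv + 1) * pR) * vR))"

definition gamma1 :: "real \<Rightarrow> real \<Rightarrow> real \<Rightarrow> real \<Rightarrow> real \<Rightarrow> real \<Rightarrow> real \<Rightarrow> real \<Rightarrow> real \<Rightarrow> real \<Rightarrow> real \<Rightarrow> real \<Rightarrow> real" where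
  "gamma1 cv rL vL pL rR vR pR rML rMR pM e d =
     (let m0 = mu0 rL vL pL rR vR pR rML rMR e; m1 = mu1 rL vL pL rR vR pR rML rMR e;
          c = C1 cv rL vL pL rR vR pR rML rMR pM e d in
      ((rML + e) * c / 2 - rL * vL^2 + pM - d - pL - m0 * ((rML + e) * m1 - rL * vL)) / (rML + e))"

definition gamma2 :: "real \<Rightarrow> real \<Rightarrow> real \<Rightarrow> real \<Rightarrow> real \<Rightarrow> real \<Rightarrow> real \<Rightarrow> real \<Rightarrow> real \<Rightarrow> real \<Rightarrow> real \<Rightarrow> real \<Rightarrow> real" where
  "gamma2 cv rL vL pL rR vR pR rML rMR pM e d =
     (let m2 = mu2 rL vL pL rR vR pR rML rMR e; m1 = mu1 rL vL pL rR vR pR rML rMR e;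
          c = C2 cv rL vL pL rR vR pR rML rMR pM e d in
      ((rMR - e) * c / 2 - rR * vR^2 + pM - d - pR - m2 * ((rMR - e) * m1 - rR * vR)) / (rMR - e))"

end

theory Submission
  imports Defs
begin

text \<open>Each \<open>mu\<^sub>i\<close> is a quotient \<open>(P - sqrt Q) / A\<close> whose denominator \<open>A\<close> may vanish at
  \<open>e = 0\<close>; since \<open>P\<^sup>2 - Q\<close> is divisible by \<open>A\<close>, rationalising gives an expression continuous at
  \<open>e = 0\<close>. With \<open>v\<^sub>M = 0\<close>, the mass and momentum jump conditions of the two shocks evaluate it
  there to \<open>s\<^sub>-\<close>, \<open>0\<close> and \<open>s\<^sub>+\<close>. The limits of \<open>C\<^sub>i\<close> and \<open>gamma\<^sub>i\<close> are then continuous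
  expressions in these values, which vanish by the energy and momentum jump conditions of the
  corresponding shock.\<close>

lemma tendsto_conjugate_divide:
  fixes P Q R A :: "'a \<Rightarrow> real"
  assumes P: "(P \<longlongrightarrow> p) F" and Q: "(Q \<longlongrightarrow> q) F" and R: "(R \<longlongrightarrow> y * (p + sqrt q)) F"
    and ne: "p + sqrt q \<noteq> 0"
    and eq: "\<forall>\<^sub>F x in F. A x \<noteq> 0 \<and> 0 \<le> Q x \<and> P x ^ 2 - Q x = A x * R x"
  shows "((\<lambda>x. (P x - sqrt (Q x)) / A x) \<longlongrightarrow> y) F"
proof -
  have PQ: "((\<lambda>x. P x + sqrt (Q x)) \<longlongrightarrow> p + sqrt q) F"
    using P Q by (intro tendsto_intros)
  have "\<forall>\<^sub>F x in F. P x + sqrt (Q x) \<noteq> 0"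
    using tendsto_imp_eventually_ne[OF PQ ne] .
  with eq have "\<forall>\<^sub>F x in F. R x / (P x + sqrt (Q x)) = (P x - sqrt (Q x)) / A x"
  proof eventually_elim
    case (elim x)
    then have "(P x - sqrt (Q x)) * (P x + sqrt (Q x)) = A x * R x"
      by (simp add: algebra_simps power2_eq_square)
    with elim show ?case
      by (simp add: field_simps)
  qed
  moreover have "((\<lambda>x. R x / (P x + sqrt (Q x))) \<longlongrightarrow> y) F"
    using tendsto_divide[OF R PQ ne] ne by simp
  ultimately show ?thesis
    by (rule Lim_transform_eventually[rotated])
qed

lemma conjugate_identities:
  fixes A u w v t z d c :: real
  assumes "A = u - w"
  shows "z = t * w \<Longrightarrow>
      (v * A + z * d)^2 - t * (z * u * d^2 - c * A) = A * (v^2 * A + 2 * v * z * d - t * z * d^2 + t * c)"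
    and "z = t * u \<Longrightarrow>
      (v * A + z * d)^2 - t * (z * w * d^2 - c * A) = A * (v^2 * A + 2 * v * z * d + t * z * d^2 + t * c)"
  by (simp_all add: assms algebra_simps power2_eq_square)

text \<open>Writing \<open>mu\<^sub>i = (P - sqrt Q) / A\<close>, these are the \<open>N\<close> with \<open>P\<^sup>2 - Q = A * N\<close>, so that
  \<open>mu\<^sub>i = N / (P + sqrt Q)\<close> wherever \<open>A \<noteq> 0\<close>.\<close>

definition mu0_numer :: "real \<Rightarrow> real \<Rightarrow> real \<Rightarrow> real \<Rightarrow> real \<Rightarrow> real \<Rightarrow> real \<Rightarrow> real \<Rightarrow> real \<Rightarrow> real" where
  "mu0_numer rL vL pL rR vR pR rML rMR e =
     vL^2 * Afun rL rR rML rMR e + 2 * vL * rR * (rML + e) * (rMR - e) * (vL - vR)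
     + (rML + e)^2 / (rML + e - rL) * ((rMR - e - rR) * (pL - pR) - rR * (rMR - e) * (vL - vR)^2)"

definition mu1_numer :: "real \<Rightarrow> real \<Rightarrow> real \<Rightarrow> real \<Rightarrow> real \<Rightarrow> real \<Rightarrow> real \<Rightarrow> real \<Rightarrow> real \<Rightarrow> real" where
  "mu1_numer rL vL pL rR vR pR rML rMR e =
     vL^2 * rL * (rML + e) * (rMR - e - rR) - vR^2 * rR * (rMR - e) * (rML + e - rL)
     + (rML + e - rL) * (rMR - e - rR) * (pL - pR)"

definition mu2_numer :: "real \<Rightarrow> real \<Rightarrow> real \<Rightarrow> real \<Rightarrow> real \<Rightarrow> real \<Rightarrow> real \<Rightarrow> real \<Rightarrow> real \<Rightarrow> real" where
  "mu2_numer rL vL pL rR vR pR rML rMR e =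
     vR^2 * Afun rL rR rML rMR e + 2 * vR * rL * (rML + e) * (rMR - e) * (vL - vR)
     + (rMR - e)^2 / (rMR - e - rR) * ((rML + e - rL) * (pL - pR) + rL * (rML + e) * (vL - vR)^2)"

lemma Afun_split:
  "Afun rL rR rML rMR e = rL * (rML + e) * (rMR - e - rR) - rR * (rMR - e) * (rML + e - rL)"
  by (simp add: Afun_def)

lemma mu0_conjugate:
  assumes "rML + e \<noteq> rL"
  shows "(Dfun rL vL rR vR rML rMR e + rL * rR * (rMR - e) * (vL - vR))^2
           - (rML + e)^2 * ((rMR - e - rR) / (rML + e - rL)) * Bfun rL vL pL rR vR pR rML rMR e
         = Afun rL rR rML rMR e * mu0_numer rL vL pL rR vR pR rML rMR e"
proof -
  define t where "t = (rML + e) / (rML + e - rL)"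
  have P: "Dfun rL vL rR vR rML rMR e + rL * rR * (rMR - e) * (vL - vR)
      = vL * Afun rL rR rML rMR e + (rR * (rML + e) * (rMR - e)) * (vL - vR)"
    by (simp add: Dfun_def Afun_def algebra_simps)
  have Q: "(rML + e)^2 * ((rMR - e - rR) / (rML + e - rL)) * Bfun rL vL pL rR vR pR rML rMR e
      = t * ((rR * (rML + e) * (rMR - e)) * (rL * (rML + e) * (rMR - e - rR)) * (vL - vR)^2
             - ((rML + e) * (rMR - e - rR) * (pL - pR)) * Afun rL rR rML rMR e)"
    using assms by (simp add: t_def Bfun_def field_simps power2_eq_square)
  have R: "mu0_numer rL vL pL rR vR pR rML rMR e
      = vL^2 * Afun rL rR rML rMR e + 2 * vL * (rR * (rML + e) * (rMR - e)) * (vL - vR)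
        - t * (rR * (rML + e) * (rMR - e)) * (vL - vR)^2 + t * ((rML + e) * (rMR - e - rR) * (pL - pR))"
  proof -
    have frac: "(rML + e)^2 / (rML + e - rL) = t * (rML + e)"
      by (simp add: t_def power2_eq_square)
    show ?thesis
      unfolding mu0_numer_def frac by (simp add: algebra_simps power2_eq_square)
  qed
  have z: "rR * (rML + e) * (rMR - e) = t * (rR * (rMR - e) * (rML + e - rL))"
    using assms by (simp add: t_def)
  show ?thesis
    unfolding P Q R by (rule conjugate_identities(1)[OF Afun_split z])
qed

lemma mu1_conjugate:
  "(Dfun rL vL rR vR rML rMR e)^2
     - (rML + e - rL) * (rMR - e - rR) * Bfun rL vL pL rR vR pR rML rMR e
   = Afun rL rR rML rMR e * mu1_numer rL vL pL rR vR pR rML rMR e"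
  by (simp add: Dfun_def Bfun_def Afun_def mu1_numer_def algebra_simps power2_eq_square)

lemma mu2_conjugate:
  assumes "rMR - e \<noteq> rR"
  shows "(Dfun rL vL rR vR rML rMR e + rL * rR * (rML + e) * (vL - vR))^2
           - (rMR - e)^2 * ((rML + e - rL) / (rMR - e - rR)) * Bfun rL vL pL rR vR pR rML rMR e
         = Afun rL rR rML rMR e * mu2_numer rL vL pL rR vR pR rML rMR e"
proof -
  define s where "s = (rMR - e) / (rMR - e - rR)"
  have P: "Dfun rL vL rR vR rML rMR e + rL * rR * (rML + e) * (vL - vR)
      = vR * Afun rL rR rML rMR e + (rL * (rML + e) * (rMR - e)) * (vL - vR)"
    by (simp add: Dfun_def Afun_def algebra_simps)
  have Q: "(rMR - e)^2 * ((rML + e - rL) / (rMR - e - rR)) * Bfun rL vL pL rR vR pR rML rMR e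
      = s * ((rL * (rML + e) * (rMR - e)) * (rR * (rMR - e) * (rML + e - rL)) * (vL - vR)^2
             - ((rMR - e) * (rML + e - rL) * (pL - pR)) * Afun rL rR rML rMR e)"
    using assms by (simp add: s_def Bfun_def field_simps power2_eq_square)
  have R: "mu2_numer rL vL pL rR vR pR rML rMR e
      = vR^2 * Afun rL rR rML rMR e + 2 * vR * (rL * (rML + e) * (rMR - e)) * (vL - vR)
        + s * (rL * (rML + e) * (rMR - e)) * (vL - vR)^2 + s * ((rMR - e) * (rML + e - rL) * (pL - pR))"
  proof -
    have frac: "(rMR - e)^2 / (rMR - e - rR) = s * (rMR - e)"
      by (simp add: s_def power2_eq_square)
    show ?thesis
      unfolding mu2_numer_def frac by (simp add: algebra_simps power2_eq_square)
  qed
  have z: "rL * (rML + e) * (rMR - e) = s * (rL * (rML + e) * (rMR - e - rR))"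
    using assms by (simp add: s_def)
  show ?thesis
    unfolding P Q R by (rule conjugate_identities(2)[OF Afun_split z])
qed

lemma tendsto_Afun [tendsto_intros]:
  "(f \<longlongrightarrow> e) F \<Longrightarrow> ((\<lambda>x. Afun rL rR rML rMR (f x)) \<longlongrightarrow> Afun rL rR rML rMR e) F"
  unfolding Afun_def by (intro tendsto_intros)

lemma tendsto_Bfun [tendsto_intros]:
  "(f \<longlongrightarrow> e) F \<Longrightarrow>
     ((\<lambda>x. Bfun rL vL pL rR vR pR rML rMR (f x)) \<longlongrightarrow> Bfun rL vL pL rR vR pR rML rMR e) F"
  unfolding Bfun_def by (intro tendsto_intros)

lemma tendsto_Dfun [tendsto_intros]:
  "(f \<longlongrightarrow> e) F \<Longrightarrow> ((\<lambda>x. Dfun rL vL rR vR rML rMR (f x)) \<longlongrightarrow> Dfun rL vL rR vR rML rMR e) F"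
  unfolding Dfun_def by (intro tendsto_intros)

lemma sound_speed_nonneg: "0 < cv \<Longrightarrow> 0 < r \<Longrightarrow> 0 \<le> p \<Longrightarrow> 0 \<le> sound_speed cv r p"
  by (simp add: sound_speed_def)

locale two_shocks_at_rest =
  fixes cv rL vL pL rR vR pR rML rMR pM sL sR :: real
  assumes shock_left: "RH cv sL rL vL pL rML 0 pM"
    and shock_right: "RH cv sR rMR 0 pM rR vR pR"
    and rL_pos: "0 < rL" and rR_pos: "0 < rR"
    and rL_less: "rL < rML" and rR_less: "rR < rMR"
    and sL_less: "sL < vL" and sR_greater: "vR < sR"
begin

lemma mass_left: "sL * (rML - rL) = - (rL * vL)"
  using shock_left by (simp add: RH_def algebra_simps)

lemma momentum_left: "pL = pM - rL * vL * (vL - sL)"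
  using shock_left by (simp add: RH_def algebra_simps power2_eq_square)

lemma energy_left: "sL * (cv * pM - (rL * vL^2 / 2 + cv * pL)) = - ((rL * vL^2 / 2 + (cv + 1) * pL) * vL)"
  using shock_left by (simp add: RH_def energy_def algebra_simps)

lemma mass_right: "sR * (rMR - rR) = - (rR * vR)"
  using shock_right by (simp add: RH_def algebra_simps)

lemma momentum_right: "pR = pM - rR * vR * (vR - sR)"
  using shock_right by (simp add: RH_def algebra_simps power2_eq_square)

lemma energy_right: "sR * (cv * pM - (rR * vR^2 / 2 + cv * pR)) = - ((rR * vR^2 / 2 + (cv + 1) * pR) * vR)"
  using shock_right by (simp add: RH_def energy_def algebra_simps)

lemma sL_neg: "sL < 0"
proof (rule ccontr)
  assume "\<not> sL < 0"
  then have "0 < rL * vL" and "0 \<le> sL * (rML - rL)"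
    using sL_less rL_pos rL_less by simp_all
  then show False
    using mass_left by linarith
qed

lemma sR_pos: "0 < sR"
proof (rule ccontr)
  assume "\<not> 0 < sR"
  then have "rR * vR < 0" and "sR * (rMR - rR) \<le> 0"
    using sR_greater rR_pos rR_less by (simp_all add: mult_pos_neg mult_nonpos_nonneg)
  then show False
    using mass_right by linarith
qed

lemma vL_pos: "0 < vL"
proof -
  have "sL * (rML - rL) < 0"
    using sL_neg rL_less by (simp add: mult_neg_pos)
  then show ?thesis
    using mass_left rL_pos by (simp add: zero_less_mult_iff)
qed

lemma vR_neg: "vR < 0"
proof -
  have "0 < sR * (rMR - rR)"
    using sR_pos rR_less by simp
  then show ?thesis
    using mass_right rR_pos by (simp add: mult_less_0_iff)
qed

definition mass_flux_sum :: real where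
  "mass_flux_sum = rMR * sR - rML * sL"

lemma mass_flux_sum_pos: "0 < mass_flux_sum"
proof -
  have "rML * sL < 0" and "0 < rMR * sR"
    using sL_neg sR_pos rL_pos rR_pos rL_less rR_less by (simp_all add: mult_pos_neg)
  then show ?thesis
    unfolding mass_flux_sum_def by linarith
qed

text \<open>In these coordinates the jump conditions are solved explicitly, so the values at \<open>e = 0\<close>
  below become polynomial identities.\<close>

lemma shock_parametrization:
  obtains a t b s
  where "0 < a" "rL = (t - 1) * a" "rML = t * a" "sL = (1 - t) * vL"
      "pL = pM - t * (t - 1) * a * vL^2"
    and "0 < b" "rR = (s - 1) * b" "rMR = s * b" "sR = (1 - s) * vR"
      "pR = pM - s * (s - 1) * b * vR^2"
proof -
  define a t b s where "a = rML - rL" and "t = rML / a" and "b = rMR - rR" and "s = rMR / b"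
  have "0 < a" "0 < b"
    using rL_less rR_less by (simp_all add: a_def b_def)
  then have rML: "rML = t * a" and rMR: "rMR = s * b"
    by (simp_all add: t_def s_def)
  have rL: "rL = (t - 1) * a" and rR: "rR = (s - 1) * b"
    using rML rMR by (simp_all add: a_def b_def algebra_simps)
  have "(sL - (1 - t) * vL) * a = 0"
    using mass_left unfolding a_def[symmetric] unfolding rL by (simp add: algebra_simps)
  then have sL: "sL = (1 - t) * vL"
    using \<open>0 < a\<close> by simp
  have "(sR - (1 - s) * vR) * b = 0"
    using mass_right unfolding b_def[symmetric] unfolding rR by (simp add: algebra_simps)
  then have sR: "sR = (1 - s) * vR"
    using \<open>0 < b\<close> by simp
  show ?thesis
  proof
    show "pL = pM - t * (t - 1) * a * vL^2"
      using momentum_left unfolding rL sL by (simp add: algebra_simps power2_eq_square)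
    show "pR = pM - s * (s - 1) * b * vR^2"
      using momentum_right unfolding rR sR by (simp add: algebra_simps power2_eq_square)
  qed fact+
qed

lemma Bfun_at_0: "Bfun rL vL pL rR vR pR rML rMR 0 = (rML - rL) * (rMR - rR) * mass_flux_sum^2"
proof -
  obtain a t b s where eqs: "rL = (t - 1) * a" "rML = t * a" "sL = (1 - t) * vL"
    "pL = pM - t * (t - 1) * a * vL^2" "rR = (s - 1) * b" "rMR = s * b" "sR = (1 - s) * vR"
    "pR = pM - s * (s - 1) * b * vR^2"
    using shock_parametrization .
  show ?thesis
    unfolding mass_flux_sum_def Bfun_def Afun_def unfolding eqs by (simp add: algebra_simps power2_eq_square)
qed

lemma Dfun_at_0: "Dfun rL vL rR vR rML rMR 0 = (rML - rL) * (rMR - rR) * mass_flux_sum"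
proof -
  obtain a t b s where eqs: "rL = (t - 1) * a" "rML = t * a" "sL = (1 - t) * vL"
    "rR = (s - 1) * b" "rMR = s * b" "sR = (1 - s) * vR"
    using shock_parametrization .
  show ?thesis
    unfolding mass_flux_sum_def Dfun_def unfolding eqs by (simp add: algebra_simps)
qed

lemma Dfun_at_0_pos: "0 < Dfun rL vL rR vR rML rMR 0"
  unfolding Dfun_at_0 using rL_less rR_less mass_flux_sum_pos by simp

lemma mu1_numer_at_0: "mu1_numer rL vL pL rR vR pR rML rMR 0 = 0"
proof -
  obtain a t b s where eqs: "rL = (t - 1) * a" "rML = t * a" "pL = pM - t * (t - 1) * a * vL^2"
    "rR = (s - 1) * b" "rMR = s * b" "pR = pM - s * (s - 1) * b * vR^2"
    using shock_parametrization .
  show ?thesis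
    unfolding mu1_numer_def eqs by (simp add: algebra_simps power2_eq_square)
qed

lemma mu0_numer_at_0:
  "mu0_numer rL vL pL rR vR pR rML rMR 0
     = sL * (Dfun rL vL rR vR rML rMR 0 + rL * rR * rMR * (vL - vR) + rML * (rMR - rR) * mass_flux_sum)"
proof -
  obtain a t b s where "0 < a" and eqs: "rL = (t - 1) * a" "rML = t * a" "sL = (1 - t) * vL"
    "pL = pM - t * (t - 1) * a * vL^2" "rR = (s - 1) * b" "rMR = s * b" "sR = (1 - s) * vR"
    "pR = pM - s * (s - 1) * b * vR^2"
    using shock_parametrization .
  have frac: "(t * a)^2 / (t * a - (t - 1) * a) = t^2 * a"
    using \<open>0 < a\<close> by (simp add: field_simps power2_eq_square)
  show ?thesis
    unfolding mass_flux_sum_def mu0_numer_def Dfun_def Afun_def unfolding eqs add_0_right diff_0_right frac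
    by (simp add: algebra_simps power2_eq_square)
qed

lemma mu2_numer_at_0:
  "mu2_numer rL vL pL rR vR pR rML rMR 0
     = sR * (Dfun rL vL rR vR rML rMR 0 + rL * rR * rML * (vL - vR) + rMR * (rML - rL) * mass_flux_sum)"
proof -
  obtain a t b s where eqs: "rL = (t - 1) * a" "rML = t * a" "sL = (1 - t) * vL"
    "pL = pM - t * (t - 1) * a * vL^2" and "0 < b" and eqs': "rR = (s - 1) * b" "rMR = s * b" "sR = (1 - s) * vR"
    "pR = pM - s * (s - 1) * b * vR^2"
    using shock_parametrization .
  have frac: "(s * b)^2 / (s * b - (s - 1) * b) = s^2 * b"
    using \<open>0 < b\<close> by (simp add: field_simps power2_eq_square)
  show ?thesis
    unfolding mass_flux_sum_def mu2_numer_def Dfun_def Afun_def unfolding eqs eqs' add_0_right diff_0_right frac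
    by (simp add: algebra_simps power2_eq_square)
qed

lemma eventually_gaps_Bfun_pos:
  assumes f: "(f \<longlongrightarrow> 0) F"
  shows "\<forall>\<^sub>F x in F. rL < rML + f x \<and> rR < rMR - f x \<and> 0 < Bfun rL vL pL rR vR pR rML rMR (f x)"
proof (intro eventually_conj)
  have "((\<lambda>x. rML + f x) \<longlongrightarrow> rML) F" and "((\<lambda>x. rMR - f x) \<longlongrightarrow> rMR) F"
    using f by (auto intro!: tendsto_eq_intros)
  then show "\<forall>\<^sub>F x in F. rL < rML + f x" and "\<forall>\<^sub>F x in F. rR < rMR - f x"
    using rL_less rR_less by (auto dest: order_tendstoD(1))
  have "0 < Bfun rL vL pL rR vR pR rML rMR 0"
    using rL_less rR_less mass_flux_sum_pos by (simp add: Bfun_at_0)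
  then show "\<forall>\<^sub>F x in F. 0 < Bfun rL vL pL rR vR pR rML rMR (f x)"
    using tendsto_Bfun[OF f] by (rule order_tendstoD(1)[rotated])
qed

lemma tendsto_mu0:
  assumes f: "(f \<longlongrightarrow> 0) F" and A: "\<forall>\<^sub>F x in F. Afun rL rR rML rMR (f x) \<noteq> 0"
  shows "((\<lambda>x. mu0 rL vL pL rR vR pR rML rMR (f x)) \<longlongrightarrow> sL) F"
proof -
  define p where "p = Dfun rL vL rR vR rML rMR 0 + rL * rR * rMR * (vL - vR)"
  define r where "r = rML * (rMR - rR) * mass_flux_sum"
  have "0 < p"
    unfolding p_def using Dfun_at_0_pos rL_pos rR_pos rR_less vL_pos vR_neg
    by (intro add_pos_pos mult_pos_pos) auto
  have "0 < r"
    unfolding r_def using rL_pos rL_less rR_less mass_flux_sum_pos by simp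
  have P: "((\<lambda>x. Dfun rL vL rR vR rML rMR (f x) + rL * rR * (rMR - f x) * (vL - vR)) \<longlongrightarrow> p) F"
    unfolding p_def using f by (auto intro!: tendsto_eq_intros)
  have "((\<lambda>x. (rML + f x)^2 * ((rMR - f x - rR) / (rML + f x - rL)) * Bfun rL vL pL rR vR pR rML rMR (f x))
      \<longlongrightarrow> (rML + 0)^2 * ((rMR - 0 - rR) / (rML + 0 - rL)) * Bfun rL vL pL rR vR pR rML rMR 0) F"
    using f rL_less by (intro tendsto_intros) auto
  then have Q: "((\<lambda>x. (rML + f x)^2 * ((rMR - f x - rR) / (rML + f x - rL)) * Bfun rL vL pL rR vR pR rML rMR (f x))
      \<longlongrightarrow> r^2) F"
    by (rule tendsto_eq_rhs) (use rL_less in \<open>simp add: Bfun_at_0 r_def field_simps power2_eq_square\<close>)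
  have "((\<lambda>x. mu0_numer rL vL pL rR vR pR rML rMR (f x)) \<longlongrightarrow> mu0_numer rL vL pL rR vR pR rML rMR 0) F"
    unfolding mu0_numer_def using f rL_less by (intro tendsto_intros) auto
  then have R: "((\<lambda>x. mu0_numer rL vL pL rR vR pR rML rMR (f x)) \<longlongrightarrow> sL * (p + sqrt (r^2))) F"
    by (rule tendsto_eq_rhs) (use \<open>0 < r\<close> in \<open>simp add: mu0_numer_at_0 p_def r_def algebra_simps\<close>)
  have "\<forall>\<^sub>F x in F. Afun rL rR rML rMR (f x) \<noteq> 0
      \<and> 0 \<le> (rML + f x)^2 * ((rMR - f x - rR) / (rML + f x - rL)) * Bfun rL vL pL rR vR pR rML rMR (f x)
      \<and> (Dfun rL vL rR vR rML rMR (f x) + rL * rR * (rMR - f x) * (vL - vR))^2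
          - (rML + f x)^2 * ((rMR - f x - rR) / (rML + f x - rL)) * Bfun rL vL pL rR vR pR rML rMR (f x)
        = Afun rL rR rML rMR (f x) * mu0_numer rL vL pL rR vR pR rML rMR (f x)"
    using A eventually_gaps_Bfun_pos[OF f]
    by eventually_elim (intro conjI mu0_conjugate mult_nonneg_nonneg divide_nonneg_nonneg, auto)
  then show ?thesis
    unfolding mu0_def using tendsto_conjugate_divide[OF P Q R] \<open>0 < p\<close> \<open>0 < r\<close> by simp
qed

lemma tendsto_mu1:
  assumes f: "(f \<longlongrightarrow> 0) F" and A: "\<forall>\<^sub>F x in F. Afun rL rR rML rMR (f x) \<noteq> 0"
  shows "((\<lambda>x. mu1 rL vL pL rR vR pR rML rMR (f x)) \<longlongrightarrow> 0) F"
proof -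
  define p where "p = Dfun rL vL rR vR rML rMR 0"
  define r where "r = (rML - rL) * (rMR - rR) * mass_flux_sum"
  have "0 < p" "0 < r"
    unfolding p_def r_def using Dfun_at_0_pos rL_less rR_less mass_flux_sum_pos by simp_all
  have P: "((\<lambda>x. Dfun rL vL rR vR rML rMR (f x)) \<longlongrightarrow> p) F"
    unfolding p_def using f by (rule tendsto_Dfun)
  have "((\<lambda>x. (rML + f x - rL) * (rMR - f x - rR) * Bfun rL vL pL rR vR pR rML rMR (f x))
      \<longlongrightarrow> (rML + 0 - rL) * (rMR - 0 - rR) * Bfun rL vL pL rR vR pR rML rMR 0) F"
    using f by (intro tendsto_intros)
  then have Q: "((\<lambda>x. (rML + f x - rL) * (rMR - f x - rR) * Bfun rL vL pL rR vR pR rML rMR (f x))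
      \<longlongrightarrow> r^2) F"
    by (rule tendsto_eq_rhs) (simp add: Bfun_at_0 r_def power2_eq_square)
  have "((\<lambda>x. mu1_numer rL vL pL rR vR pR rML rMR (f x)) \<longlongrightarrow> mu1_numer rL vL pL rR vR pR rML rMR 0) F"
    unfolding mu1_numer_def using f by (intro tendsto_intros)
  then have R: "((\<lambda>x. mu1_numer rL vL pL rR vR pR rML rMR (f x)) \<longlongrightarrow> 0 * (p + sqrt (r^2))) F"
    by (simp add: mu1_numer_at_0)
  have "\<forall>\<^sub>F x in F. Afun rL rR rML rMR (f x) \<noteq> 0
      \<and> 0 \<le> (rML + f x - rL) * (rMR - f x - rR) * Bfun rL vL pL rR vR pR rML rMR (f x)
      \<and> (Dfun rL vL rR vR rML rMR (f x))^2
          - (rML + f x - rL) * (rMR - f x - rR) * Bfun rL vL pL rR vR pR rML rMR (f x)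
        = Afun rL rR rML rMR (f x) * mu1_numer rL vL pL rR vR pR rML rMR (f x)"
    using A eventually_gaps_Bfun_pos[OF f] by eventually_elim (simp add: mu1_conjugate)
  then show ?thesis
    unfolding mu1_def using tendsto_conjugate_divide[OF P Q R] \<open>0 < p\<close> \<open>0 < r\<close> by simp
qed

lemma tendsto_mu2:
  assumes f: "(f \<longlongrightarrow> 0) F" and A: "\<forall>\<^sub>F x in F. Afun rL rR rML rMR (f x) \<noteq> 0"
  shows "((\<lambda>x. mu2 rL vL pL rR vR pR rML rMR (f x)) \<longlongrightarrow> sR) F"
proof -
  define p where "p = Dfun rL vL rR vR rML rMR 0 + rL * rR * rML * (vL - vR)"
  define r where "r = rMR * (rML - rL) * mass_flux_sum"
  have "0 < p"
    unfolding p_def using Dfun_at_0_pos rL_pos rR_pos rL_less vL_pos vR_neg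
    by (intro add_pos_pos mult_pos_pos) auto
  have "0 < r"
    unfolding r_def using rR_pos rL_less rR_less mass_flux_sum_pos by simp
  have P: "((\<lambda>x. Dfun rL vL rR vR rML rMR (f x) + rL * rR * (rML + f x) * (vL - vR)) \<longlongrightarrow> p) F"
    unfolding p_def using f by (auto intro!: tendsto_eq_intros)
  have "((\<lambda>x. (rMR - f x)^2 * ((rML + f x - rL) / (rMR - f x - rR)) * Bfun rL vL pL rR vR pR rML rMR (f x))
      \<longlongrightarrow> (rMR - 0)^2 * ((rML + 0 - rL) / (rMR - 0 - rR)) * Bfun rL vL pL rR vR pR rML rMR 0) F"
    using f rR_less by (intro tendsto_intros) auto
  then have Q: "((\<lambda>x. (rMR - f x)^2 * ((rML + f x - rL) / (rMR - f x - rR)) * Bfun rL vL pL rR vR pR rML rMR (f x))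
      \<longlongrightarrow> r^2) F"
    by (rule tendsto_eq_rhs) (use rR_less in \<open>simp add: Bfun_at_0 r_def field_simps power2_eq_square\<close>)
  have "((\<lambda>x. mu2_numer rL vL pL rR vR pR rML rMR (f x)) \<longlongrightarrow> mu2_numer rL vL pL rR vR pR rML rMR 0) F"
    unfolding mu2_numer_def using f rR_less by (intro tendsto_intros) auto
  then have R: "((\<lambda>x. mu2_numer rL vL pL rR vR pR rML rMR (f x)) \<longlongrightarrow> sR * (p + sqrt (r^2))) F"
    by (rule tendsto_eq_rhs) (use \<open>0 < r\<close> in \<open>simp add: mu2_numer_at_0 p_def r_def algebra_simps\<close>)
  have "\<forall>\<^sub>F x in F. Afun rL rR rML rMR (f x) \<noteq> 0
      \<and> 0 \<le> (rMR - f x)^2 * ((rML + f x - rL) / (rMR - f x - rR)) * Bfun rL vL pL rR vR pR rML rMR (f x)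
      \<and> (Dfun rL vL rR vR rML rMR (f x) + rL * rR * (rML + f x) * (vL - vR))^2
          - (rMR - f x)^2 * ((rML + f x - rL) / (rMR - f x - rR)) * Bfun rL vL pL rR vR pR rML rMR (f x)
        = Afun rL rR rML rMR (f x) * mu2_numer rL vL pL rR vR pR rML rMR (f x)"
    using A eventually_gaps_Bfun_pos[OF f]
    by eventually_elim (intro conjI mu2_conjugate mult_nonneg_nonneg divide_nonneg_nonneg, auto)
  then show ?thesis
    unfolding mu2_def using tendsto_conjugate_divide[OF P Q R] \<open>0 < p\<close> \<open>0 < r\<close> by simp
qed

lemma tendsto_C1:
  assumes f: "(f \<longlongrightarrow> 0) F" and g: "(g \<longlongrightarrow> 0) F"
    and A: "\<forall>\<^sub>F x in F. Afun rL rR rML rMR (f x) \<noteq> 0"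
  shows "((\<lambda>x. C1 cv rL vL pL rR vR pR rML rMR pM (f x) (g x)) \<longlongrightarrow> 0) F"
proof -
  have "((\<lambda>x. C1 cv rL vL pL rR vR pR rML rMR pM (f x) (g x)) \<longlongrightarrow>
      2 / ((rML + 0) * (sL - 0)) * (- sL * (cv * (pM - 0 - pL) - rL * vL^2 / 2) + 0 * (cv + 1) * (pM - 0)
        - (rL * vL^2 / 2 + (cv + 1) * pL) * vL)) F"
    unfolding C1_def Let_def using sL_neg rL_pos rL_less
    by (intro tendsto_intros tendsto_mu0[OF f A] tendsto_mu1[OF f A] f g) auto
  then show ?thesis
    by (rule tendsto_eq_rhs) (use energy_left in \<open>simp add: algebra_simps\<close>)
qed

lemma tendsto_C2:
  assumes f: "(f \<longlongrightarrow> 0) F" and g: "(g \<longlongrightarrow> 0) F"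
    and A: "\<forall>\<^sub>F x in F. Afun rL rR rML rMR (f x) \<noteq> 0"
  shows "((\<lambda>x. C2 cv rL vL pL rR vR pR rML rMR pM (f x) (g x)) \<longlongrightarrow> 0) F"
proof -
  have "((\<lambda>x. C2 cv rL vL pL rR vR pR rML rMR pM (f x) (g x)) \<longlongrightarrow>
      2 / ((rMR - 0) * (sR - 0)) * (- sR * (cv * (pM - 0 - pR) - rR * vR^2 / 2) + 0 * (cv + 1) * (pM - 0)
        - (rR * vR^2 / 2 + (cv + 1) * pR) * vR)) F"
    unfolding C2_def Let_def using sR_pos rR_pos rR_less
    by (intro tendsto_intros tendsto_mu2[OF f A] tendsto_mu1[OF f A] f g) auto
  then show ?thesis
    by (rule tendsto_eq_rhs) (use energy_right in \<open>simp add: algebra_simps\<close>)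
qed

lemma tendsto_gamma1:
  assumes f: "(f \<longlongrightarrow> 0) F" and g: "(g \<longlongrightarrow> 0) F"
    and A: "\<forall>\<^sub>F x in F. Afun rL rR rML rMR (f x) \<noteq> 0"
  shows "((\<lambda>x. gamma1 cv rL vL pL rR vR pR rML rMR pM (f x) (g x)) \<longlongrightarrow> 0) F"
proof -
  have "((\<lambda>x. gamma1 cv rL vL pL rR vR pR rML rMR pM (f x) (g x)) \<longlongrightarrow>
      ((rML + 0) * 0 / 2 - rL * vL^2 + pM - 0 - pL - sL * ((rML + 0) * 0 - rL * vL)) / (rML + 0)) F"
    unfolding gamma1_def Let_def using rL_pos rL_less
    by (intro tendsto_intros tendsto_mu0[OF f A] tendsto_mu1[OF f A] tendsto_C1[OF f g A] f g) auto
  then show ?thesis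
    by (rule tendsto_eq_rhs) (use momentum_left in \<open>simp add: algebra_simps power2_eq_square\<close>)
qed

lemma tendsto_gamma2:
  assumes f: "(f \<longlongrightarrow> 0) F" and g: "(g \<longlongrightarrow> 0) F"
    and A: "\<forall>\<^sub>F x in F. Afun rL rR rML rMR (f x) \<noteq> 0"
  shows "((\<lambda>x. gamma2 cv rL vL pL rR vR pR rML rMR pM (f x) (g x)) \<longlongrightarrow> 0) F"
proof -
  have "((\<lambda>x. gamma2 cv rL vL pL rR vR pR rML rMR pM (f x) (g x)) \<longlongrightarrow>
      ((rMR - 0) * 0 / 2 - rR * vR^2 + pM - 0 - pR - sR * ((rMR - 0) * 0 - rR * vR)) / (rMR - 0)) F"
    unfolding gamma2_def Let_def using rR_pos rR_less
    by (intro tendsto_intros tendsto_mu2[OF f A] tendsto_mu1[OF f A] tendsto_C2[OF f g A] f g) auto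
  then show ?thesis
    by (rule tendsto_eq_rhs) (use momentum_right in \<open>simp add: algebra_simps power2_eq_square\<close>)
qed

end

theorem proposition5p3:
  fixes cv rL vL pL rR vR pR rML rMR vM pM sL sR emax :: real
  assumes cv: "cv > 1/2"
    and data: "rL > 0" "pL > 0" "rR > 0" "pR > 0"
    and shock1: "RH cv sL rL vL pL rML vM pM"
    and shock3: "RH cv sR rMR vM pM rR vR pR"
    and lax1: "vL - sound_speed cv rL pL > sL" "sL > vM - sound_speed cv rML pM"
    and lax3: "vM + sound_speed cv rMR pM > sR" "sR > vR + sound_speed cv rR pR"
    and dens: "rML > rL" "rMR > rR"
    and pres: "pM > max pL pR"
    and vM0: "vM = 0"
    and emax: "emax > 0"
    and emax_prop: "\<And>e. e \<in> {0<..emax} \<Longrightarrow>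
        Afun rL rR rML rMR e \<noteq> 0 \<and>
        Bfun rL vL pL rR vR pR rML rMR e > 0 \<and>
        rMR - e - rR > 0 \<and> rML + e - rL > 0 \<and>
        mu0 rL vL pL rR vR pR rML rMR e < mu1 rL vL pL rR vR pR rML rMR e \<and>
        mu1 rL vL pL rR vR pR rML rMR e < mu2 rL vL pL rR vR pR rML rMR e"
  shows "((\<lambda>(e, d). C1 cv rL vL pL rR vR pR rML rMR pM e d) \<longlongrightarrow> vM^2)
           (at (0, 0) within ({0<..emax} \<times> {0<..<pM})) \<and>
         ((\<lambda>(e, d). C2 cv rL vL pL rR vR pR rML rMR pM e d) \<longlongrightarrow> vM^2)
           (at (0, 0) within ({0<..emax} \<times> {0<..<pM})) \<and>
         ((\<lambda>(e, d). gamma1 cv rL vL pL rR vR pR rML rMR pM e d) \<longlongrightarrow> - (vM^2 / 2))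
           (at (0, 0) within ({0<..emax} \<times> {0<..<pM})) \<and>
         ((\<lambda>(e, d). gamma2 cv rL vL pL rR vR pR rML rMR pM e d) \<longlongrightarrow> - (vM^2 / 2))
           (at (0, 0) within ({0<..emax} \<times> {0<..<pM}))"
proof -
  have "0 \<le> sound_speed cv rL pL" "0 \<le> sound_speed cv rR pR"
    using cv data by (simp_all add: sound_speed_nonneg)
  then interpret two_shocks_at_rest cv rL vL pL rR vR pR rML rMR pM sL sR
    using shock1 shock3 lax1(1) lax3(2) data dens unfolding vM0 by unfold_locales auto
  define F where "F = at (0::real, 0::real) within {0<..emax} \<times> {0<..<pM}"
  have "((\<lambda>x. x) \<longlongrightarrow> (0, 0)) F"
    unfolding F_def by (rule tendsto_ident_at)
  then have fst: "(fst \<longlongrightarrow> 0) F" and snd: "(snd \<longlongrightarrow> 0) F"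
    using tendsto_fst tendsto_snd by fastforce+
  have A: "\<forall>\<^sub>F x in F. Afun rL rR rML rMR (fst x) \<noteq> 0"
    unfolding F_def eventually_at_filter
  proof (intro always_eventually allI impI)
    fix x :: "real \<times> real"
    assume "x \<noteq> (0, 0)" and "x \<in> {0<..emax} \<times> {0<..<pM}"
    then have "fst x \<in> {0<..emax}"
      by auto
    then show "Afun rL rR rML rMR (fst x) \<noteq> 0"
      by (rule emax_prop[THEN conjunct1])
  qed
  show ?thesis
    using tendsto_C1[OF fst snd A] tendsto_C2[OF fst snd A]
      tendsto_gamma1[OF fst snd A] tendsto_gamma2[OF fst snd A]
    unfolding F_def vM0 case_prod_beta' by simp
qed

end
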